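(* Let $p\ge 3$ be a prime and let $w$ be a zero-sum-free $\mathbb{Z}_p$-arc-labelling of $\overleftrightarrow{K}_3$. Then there exist a vertex $v\in V(\overleftrightarrow{K}_3)$ and directed paths $P_1,P_2$ of positive length in $\overleftrightarrow{K}_3$, both ending at $v$, such that the three values $0$, $\sum_{(x,y)\in A(P_1)} w(x,y)$ and $\sum_{(x,y)\in A(P_2)} w(x,y)$ are pairwise distinct.
   Context: $\overleftrightarrow{K}_3$ denotes the complete digraph on $3$ vertices whose arc set consists of all ordered pairs of distinct vertices; $A(P)$ denotes the arc set of a path $P$. A $\mathbb{Z}_p$-arc-labelling is a function from the arc set to the cyclic group $\mathbb{Z}_p$; it is zero-sum-free if no directed cycle (including directed cycles of length two) has arc-labels summing to $0$ in $\mathbb{Z}_p$. *)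

theory Defs
  imports "HOL-Number_Theory.Number_Theory"
begin

text \<open>The complete digraph on the vertex set V: every ordered pair of distinct
 vertices of V is an arc. Here K3 has vertex set {0,1,2}.\<close>

definition K3_vertices :: "nat set" where
  "K3_vertices = {0, 1, 2}"

text \<open>A directed path of positive length: a list of pairwise distinct vertices
 with at least two entries (hence at least one arc); in a complete digraph every
 consecutive pair is an arc.\<close>

definition dpath :: "'a set \<Rightarrow> 'a list \<Rightarrow> bool" where
  "dpath V xs \<longleftrightarrow> distinct xs \<and> 2 \<le> length xs \<and> set xs \<subseteq> V"

definition path_arcs :: "'a list \<Rightarrow> ('a \<times> 'a) set" where
  "path_arcs xs = set (zip xs (tl xs))"

definition dcycle :: "'a set \<Rightarrow> 'a list \<Rightarrow> bool" where
  "dcycle V xs \<longleftrightarrow> distinct xs \<and> 2 \<le> length xs \<and> set xs \<subseteq> V"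

definition cycle_arcs :: "'a list \<Rightarrow> ('a \<times> 'a) list" where
  "cycle_arcs xs = zip xs (tl xs @ [hd xs])"

text \<open>Z_p-labels are represented by integers, compared modulo p.\<close>

definition zero_sum_free :: "nat \<Rightarrow> 'a set \<Rightarrow> ('a \<times> 'a \<Rightarrow> int) \<Rightarrow> bool" where
  "zero_sum_free p V w \<longleftrightarrow>
     (\<forall>xs. dcycle V xs \<longrightarrow> \<not> [sum_list (map w (cycle_arcs xs)) = 0] (mod int p))"

end

theory Submission
  imports Defs
begin

text \<open>Suppose no vertex is the end of two paths with distinct nonzero sums. Then two consecutive
 arcs x \<rightarrow> u \<rightarrow> v with nonzero labels must have labels summing to 0, for otherwise the paths
 u v and x u v would do. Since every 2-cycle has nonzero sum, each pair of opposite arcs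
 contains a nonzero one, and among three such arcs two are consecutive. The triangle closing
 them has nonzero sum, so its third label is nonzero as well; then all three pairs of
 consecutive labels a, b, c cancel, whence a = -b = c = -a and 2a = 0, impossible for odd p.\<close>

definition has_distinct_nonzero_path_sums ::
    "'a set \<Rightarrow> int \<Rightarrow> ('a \<times> 'a \<Rightarrow> int) \<Rightarrow> 'a \<Rightarrow> bool" where
  "has_distinct_nonzero_path_sums V m w v \<longleftrightarrow> (\<exists>P1 P2.
     dpath V P1 \<and> dpath V P2 \<and> last P1 = v \<and> last P2 = v \<and>
     \<not> [(\<Sum>a \<in> path_arcs P1. w a) = 0] (mod m) \<and>
     \<not> [(\<Sum>a \<in> path_arcs P2. w a) = 0] (mod m) \<and>
     \<not> [(\<Sum>a \<in> path_arcs P1. w a) = (\<Sum>a \<in> path_arcs P2. w a)] (mod m))"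

lemma zero_sum_free_two_cycle:
  assumes "zero_sum_free p V w" and "s \<in> V" "t \<in> V" "s \<noteq> t"
  shows "\<not> [w (s, t) + w (t, s) = 0] (mod int p)"
  using assms unfolding zero_sum_free_def
  by (auto dest: spec[of _ "[s, t]"] simp: dcycle_def cycle_arcs_def)

lemma zero_sum_free_triangle:
  assumes "zero_sum_free p V w" and "distinct [a, b, c]" "{a, b, c} \<subseteq> V"
  shows "\<not> [w (a, b) + w (b, c) + w (c, a) = 0] (mod int p)"
  using assms unfolding zero_sum_free_def
  by (auto dest: spec[of _ "[a, b, c]"] simp: dcycle_def cycle_arcs_def add.assoc)

lemma has_distinct_nonzero_path_sumsI:
  assumes "distinct [x, u, v]" "{x, u, v} \<subseteq> V"
    and "\<not> [w (x, u) = 0] (mod m)" "\<not> [w (u, v) = 0] (mod m)"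
    and "\<not> [w (x, u) + w (u, v) = 0] (mod m)"
  shows "has_distinct_nonzero_path_sums V m w v"
  unfolding has_distinct_nonzero_path_sums_def
proof (intro exI conjI)
  show "dpath V [u, v]" "dpath V [x, u, v]" "last [u, v] = v" "last [x, u, v] = v"
    using assms(1,2) by (auto simp: dpath_def)
  have sum1: "(\<Sum>a \<in> path_arcs [u, v]. w a) = w (u, v)"
    by (simp add: path_arcs_def)
  have sum2: "(\<Sum>a \<in> path_arcs [x, u, v]. w a) = w (x, u) + w (u, v)"
    using assms(1) by (simp add: path_arcs_def)
  show "\<not> [(\<Sum>a \<in> path_arcs [u, v]. w a) = 0] (mod m)"
    "\<not> [(\<Sum>a \<in> path_arcs [x, u, v]. w a) = 0] (mod m)"
    using assms(4,5) by (simp_all add: sum1 sum2)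
  show "\<not> [(\<Sum>a \<in> path_arcs [u, v]. w a) = (\<Sum>a \<in> path_arcs [x, u, v]. w a)] (mod m)"
    using assms(3) by (simp add: sum1 sum2 cong_0_iff cong_iff_dvd_diff)
qed

lemma nonzero_consecutive_arcs:
  fixes w :: "'a \<times> 'a \<Rightarrow> int"
  assumes "distinct [x, y, z]"
    and "\<And>s t. s \<in> {x, y, z} \<Longrightarrow> t \<in> {x, y, z} \<Longrightarrow> s \<noteq> t \<Longrightarrow>
           \<not> [w (s, t) + w (t, s) = 0] (mod m)"
  obtains a b c where "distinct [a, b, c]" "{a, b, c} \<subseteq> {x, y, z}"
    "\<not> [w (a, b) = 0] (mod m)" "\<not> [w (b, c) = 0] (mod m)"
proof -
  note found = that
  have one_nonzero: "\<not> [w (s, t) = 0] (mod m) \<or> \<not> [w (t, s) = 0] (mod m)"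
    if "s \<in> {x, y, z}" "t \<in> {x, y, z}" "s \<noteq> t" for s t
    using assms(2)[OF that] cong_add[of "w (s, t)" 0 m "w (t, s)" 0] by auto
  have from_arc: thesis
    if vertices: "{s, t, r} = {x, y, z}" and dist: "distinct [s, t, r]"
      and st: "\<not> [w (s, t) = 0] (mod m)" for s t r
  proof -
    have "s \<in> {x, y, z}" "t \<in> {x, y, z}" "r \<in> {x, y, z}"
      using vertices by blast+
    then have "\<not> [w (t, r) = 0] (mod m) \<or> \<not> [w (r, t) = 0] (mod m)"
      "\<not> [w (r, s) = 0] (mod m) \<or> \<not> [w (s, r) = 0] (mod m)"
      using one_nonzero dist by auto
    then consider "\<not> [w (t, r) = 0] (mod m)"
      | "\<not> [w (r, t) = 0] (mod m)" "\<not> [w (r, s) = 0] (mod m)"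
      | "\<not> [w (r, t) = 0] (mod m)" "\<not> [w (s, r) = 0] (mod m)"
      by blast
    then show thesis
    proof cases
      case 1
      then show thesis using found[of s t r] vertices dist st by auto
    next
      case 2
      then show thesis using found[of r s t] vertices dist st by auto
    next
      case 3
      then show thesis using found[of s r t] vertices dist st by auto
    qed
  qed
  show thesis
    using one_nonzero[of x y] from_arc[of x y z] from_arc[of y x z] assms(1)
    by (auto simp: insert_commute)
qed

lemma no_cancelling_triangle_mod_odd:
  fixes a b c m :: int
  assumes "odd m" and "\<not> [a + b + c = 0] (mod m)"
    and "\<not> [a = 0] (mod m)" "\<not> [b = 0] (mod m)"
    and "\<not> [a = 0] (mod m) \<Longrightarrow> \<not> [b = 0] (mod m) \<Longrightarrow> [a + b = 0] (mod m)"
    and "\<not> [b = 0] (mod m) \<Longrightarrow> \<not> [c = 0] (mod m) \<Longrightarrow> [b + c = 0] (mod m)"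
    and "\<not> [c = 0] (mod m) \<Longrightarrow> \<not> [a = 0] (mod m) \<Longrightarrow> [c + a = 0] (mod m)"
  shows False
proof -
  have "m dvd a + b"
    using assms(3-5) by (simp add: cong_0_iff)
  then have "\<not> m dvd c"
    using assms(2) by (metis cong_0_iff dvd_add_right_iff)
  then have "m dvd b + c" "m dvd c + a"
    using assms(3,4,6,7) by (simp_all add: cong_0_iff)
  moreover have "2 * a = (a + b) + (c + a) - (b + c)"
    by simp
  ultimately have "m dvd 2 * a"
    using \<open>m dvd a + b\<close> by (metis dvd_add dvd_diff)
  moreover have "coprime m 2"
    using assms(1) by simp
  ultimately show False
    using assms(3) by (simp add: cong_0_iff coprime_dvd_mult_right_iff)
qed

theorem lemma6:
  fixes p :: nat and w :: "nat \<times> nat \<Rightarrow> int"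
  assumes "prime p" and "p \<ge> 3"
    and "zero_sum_free p K3_vertices w"
  shows "\<exists>v \<in> K3_vertices. \<exists>P1 P2.
           dpath K3_vertices P1 \<and> dpath K3_vertices P2 \<and> last P1 = v \<and> last P2 = v \<and>
           \<not> [(\<Sum>a \<in> path_arcs P1. w a) = 0] (mod int p) \<and>
           \<not> [(\<Sum>a \<in> path_arcs P2. w a) = 0] (mod int p) \<and>
           \<not> [(\<Sum>a \<in> path_arcs P1. w a) = (\<Sum>a \<in> path_arcs P2. w a)] (mod int p)"
proof (rule ccontr)
  assume "\<not> ?thesis"
  then have cancel: "[w (x, u) + w (u, v) = 0] (mod int p)"
    if "distinct [x, u, v]" "{x, u, v} \<subseteq> K3_vertices"
      "\<not> [w (x, u) = 0] (mod int p)" "\<not> [w (u, v) = 0] (mod int p)" for x u v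
    using that has_distinct_nonzero_path_sumsI[of x u v K3_vertices w "int p"]
    unfolding has_distinct_nonzero_path_sums_def by blast
  obtain a b c where abc: "distinct [a, b, c]" "{a, b, c} \<subseteq> K3_vertices"
    "\<not> [w (a, b) = 0] (mod int p)" "\<not> [w (b, c) = 0] (mod int p)"
    using nonzero_consecutive_arcs[of 0 1 2 w "int p"] zero_sum_free_two_cycle[OF assms(3)]
    unfolding K3_vertices_def by auto
  have "odd (int p)"
    using assms(1,2) prime_odd_nat by auto
  then show False
    using no_cancelling_triangle_mod_odd[of "int p" "w (a, b)" "w (b, c)" "w (c, a)"] abc
      zero_sum_free_triangle[OF assms(3) abc(1,2)]
      cancel[of a b c] cancel[of b c a] cancel[of c a b]
    by (auto simp: insert_commute)
qed

end
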